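(* Let $R$ be a semilocal commutative ring in which $2$ is invertible and $n\ge3$. Equip $R^{2n+1}$ with the standard form of matrix $\tilde\phi_{2n+1}=(2)\perp\widetilde{\psi}_n$. Let $u,v\in R^{2n+1}$ where $u$ is an isotropic unimodular vector with $\langle u,v\rangle=0$. Then $\sigma_{u,v}\in\mathrm{EO}_{2n+1}(R)$.
   Context: $e_{i,j}$ are matrix units and $\widetilde{\psi}_s=\sum_{i=1}^s(e_{2i-1,2i}+e_{2i,2i-1})$. On $R^{2n+1}$ the bilinear form is $\langle a,b\rangle=a^t\tilde\phi_{2n+1}b$ and the quadratic form is $q(a)=\tfrac12\langle a,a\rangle$. For $u,v$ with $u$ unimodular, $q(u)=0$, $\langle u,v\rangle=0$ and $r=q(v)$, the Eichler–Siegel–Dickson transvection is $\sigma_{u,v}(x)=x+\langle v,x\rangle u-\langle u,x\rangle v-r\langle u,x\rangle u$. Odd elementary orthogonal group: for $N=2s+1$ and $1\le i\le s$, $\lambda\in R$, $F^1_i(\lambda)=I_N+\lambda(e_{1,2i+1}-2e_{2i,1}-\lambda e_{2i,2i+1})$, $F^2_i(\lambda)=I_N+\lambda(e_{1,2i}-2e_{2i+1,1}-\lambda e_{2i+1,2i})$; $\mathrm{EO}_{2s+1}(R)$ is the group they generate. *)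

theory Defs
  imports "Jordan_Normal_Form.Matrix"
begin

definition ring_ideal :: "'a::comm_ring_1 set \<Rightarrow> bool" where
  "ring_ideal I \<longleftrightarrow> 0 \<in> I \<and> (\<forall>x\<in>I. \<forall>y\<in>I. x + y \<in> I) \<and> (\<forall>r x. x \<in> I \<longrightarrow> r * x \<in> I)"

definition maximal_ideal :: "'a::comm_ring_1 set \<Rightarrow> bool" where
  "maximal_ideal M \<longleftrightarrow> ring_ideal M \<and> M \<noteq> UNIV \<and>
     (\<forall>J. ring_ideal J \<and> M \<subseteq> J \<longrightarrow> J = M \<or> J = UNIV)"

definition semilocal :: "'a::comm_ring_1 itself \<Rightarrow> bool" where
  "semilocal _ \<longleftrightarrow> finite {M :: 'a set. maximal_ideal M}"

(* Matrix units e_{i,j} (1-based, as in the paper) of size N x N *)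
definition unit_mat :: "nat \<Rightarrow> nat \<Rightarrow> nat \<Rightarrow> 'a::comm_ring_1 mat" where
  "unit_mat N i j = mat N N (\<lambda>(a,b). if a = i - 1 \<and> b = j - 1 then 1 else 0)"

definition psi_tilde :: "nat \<Rightarrow> 'a::comm_ring_1 mat" where
  "psi_tilde s = mat (2*s) (2*s) (\<lambda>(a,b). \<Sum>i\<in>{1..s}.
      (unit_mat (2*s) (2*i-1) (2*i) + unit_mat (2*s) (2*i) (2*i-1)) $$ (a,b))"

definition phi_tilde :: "nat \<Rightarrow> 'a::comm_ring_1 mat" where
  "phi_tilde n = four_block_mat (mat 1 1 (\<lambda>_. 2)) (0\<^sub>m 1 (2*n)) (0\<^sub>m (2*n) 1) (psi_tilde n)"

definition bform :: "nat \<Rightarrow> 'a::comm_ring_1 vec \<Rightarrow> 'a vec \<Rightarrow> 'a" where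
  "bform n a b = a \<bullet> (phi_tilde n *\<^sub>v b)"

(* quadratic form q(a) = (1/2)<a,a>, i.e. the unique r with 2 r = <a,a>
   (2 is assumed invertible where this is used) *)
definition qform :: "nat \<Rightarrow> 'a::comm_ring_1 vec \<Rightarrow> 'a" where
  "qform n a = (THE r. 2 * r = bform n a a)"

definition unimodular :: "'a::comm_ring_1 vec \<Rightarrow> bool" where
  "unimodular u \<longleftrightarrow> (\<exists>w. dim_vec w = dim_vec u \<and> u \<bullet> w = 1)"

definition esd :: "nat \<Rightarrow> 'a::comm_ring_1 vec \<Rightarrow> 'a vec \<Rightarrow> 'a vec \<Rightarrow> 'a vec" where
  "esd n u v x = x + bform n v x \<cdot>\<^sub>v u - bform n u x \<cdot>\<^sub>v v - (qform n v * bform n u x) \<cdot>\<^sub>v u"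

definition esd_mat :: "nat \<Rightarrow> 'a::comm_ring_1 vec \<Rightarrow> 'a vec \<Rightarrow> 'a mat" where
  "esd_mat n u v = mat_of_cols (2*n+1) (map (\<lambda>j. esd n u v (unit_vec (2*n+1) j)) [0..<2*n+1])"

definition F1 :: "nat \<Rightarrow> nat \<Rightarrow> 'a::comm_ring_1 \<Rightarrow> 'a mat" where
  "F1 s i c = 1\<^sub>m (2*s+1) + c \<cdot>\<^sub>m (unit_mat (2*s+1) 1 (2*i+1) - 2 \<cdot>\<^sub>m unit_mat (2*s+1) (2*i) 1
      - c \<cdot>\<^sub>m unit_mat (2*s+1) (2*i) (2*i+1))"

definition F2 :: "nat \<Rightarrow> nat \<Rightarrow> 'a::comm_ring_1 \<Rightarrow> 'a mat" where
  "F2 s i c = 1\<^sub>m (2*s+1) + c \<cdot>\<^sub>m (unit_mat (2*s+1) 1 (2*i) - 2 \<cdot>\<^sub>m unit_mat (2*s+1) (2*i+1) 1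
      - c \<cdot>\<^sub>m unit_mat (2*s+1) (2*i+1) (2*i))"

definition EO_gens :: "nat \<Rightarrow> 'a::comm_ring_1 mat set" where
  "EO_gens s = {F1 s i c | i c. 1 \<le> i \<and> i \<le> s} \<union> {F2 s i c | i c. 1 \<le> i \<and> i \<le> s}"

inductive_set EO :: "nat \<Rightarrow> 'a::comm_ring_1 mat set" for s where
  EO_one: "1\<^sub>m (2*s+1) \<in> EO s"
| EO_gen: "g \<in> EO_gens s \<Longrightarrow> M \<in> EO s \<Longrightarrow> g * M \<in> EO s"
| EO_inv: "g \<in> EO_gens s \<Longrightarrow> h \<in> carrier_mat (2*s+1) (2*s+1) \<Longrightarrow> g * h = 1\<^sub>m (2*s+1)
           \<Longrightarrow> h * g = 1\<^sub>m (2*s+1) \<Longrightarrow> M \<in> EO s \<Longrightarrow> h * M \<in> EO s"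

end

theory Submission
  imports Defs
begin

(* Call u elementary if every transvection \<sigma>_{u,v} with <u,v> = 0 lies in EO. The generators
   of EO are the \<sigma>_{e_a, \<lambda> e_0}; conjugating one of them by another gives \<sigma>_{e_a, y e_b} for
   b different from a and its hyperbolic partner, and since v \<mapsto> \<sigma>_{u,v} is additive on u^\<bottom>,
   every scaled basis vector c e_a (a \<ge> 1) is elementary. Since g \<sigma>_{u,v} g^{-1} = \<sigma>_{gu,gv}
   for an isometry g, being elementary is preserved by elementary transvections, so it suffices
   to move u to an elementary vector. If u_2 is a unit, \<sigma>_{e_1,w} with
   w = u_2^{-1} (u - u_1 e_1 - u_2 e_2) maps u to z e_1 + u_2 e_2, and isotropy forces z = 0.
   Over a semilocal ring some \<sigma>_{e_2,w} makes u_2 a unit: modulo each maximal ideal a suitable w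
   exists because u is unimodular, and the Chinese remainder theorem glues these local choices.
   The argument only needs n \<ge> 1. *)

section \<open>Ideals and maximal ideals\<close>

lemma ring_ideal_zero: "ring_ideal I \<Longrightarrow> 0 \<in> I"
  by (simp add: ring_ideal_def)

lemma ring_ideal_add: "ring_ideal I \<Longrightarrow> x \<in> I \<Longrightarrow> y \<in> I \<Longrightarrow> x + y \<in> I"
  by (simp add: ring_ideal_def)

lemma ring_ideal_mult_left: "ring_ideal I \<Longrightarrow> x \<in> I \<Longrightarrow> r * x \<in> I"
  by (simp add: ring_ideal_def)

lemma ring_ideal_mult_right: "ring_ideal I \<Longrightarrow> x \<in> I \<Longrightarrow> x * r \<in> I"
  by (metis ring_ideal_mult_left mult.commute)

lemma ring_ideal_diff: "ring_ideal I \<Longrightarrow> x \<in> I \<Longrightarrow> y \<in> I \<Longrightarrow> x - y \<in> I"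
  using ring_ideal_add[of I x "(-1) * y"] ring_ideal_mult_left[of I y "-1"] by simp

lemma ring_ideal_sum:
  "ring_ideal I \<Longrightarrow> (\<And>x. x \<in> S \<Longrightarrow> f x \<in> I) \<Longrightarrow> sum f S \<in> I"
  by (induction S rule: infinite_finite_induct) (auto intro: ring_ideal_zero ring_ideal_add)

lemma ring_ideal_one_iff: "ring_ideal I \<Longrightarrow> 1 \<in> I \<longleftrightarrow> I = UNIV"
  using ring_ideal_mult_right[of I 1] by auto

lemma scalar_prod_in_ideal:
  "ring_ideal I \<Longrightarrow> dim_vec b = dim_vec a \<Longrightarrow> (\<And>i. i < dim_vec a \<Longrightarrow> a $ i \<in> I) \<Longrightarrow> a \<bullet> b \<in> I"
  unfolding scalar_prod_def by (intro ring_ideal_sum ring_ideal_mult_right) auto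

lemma maximal_ideal_imp_ring_ideal: "maximal_ideal m \<Longrightarrow> ring_ideal m"
  by (simp add: maximal_ideal_def)

lemma one_notin_maximal_ideal: "maximal_ideal m \<Longrightarrow> 1 \<notin> m"
  by (simp add: maximal_ideal_def ring_ideal_one_iff)

lemma maximal_ideal_coprime:
  fixes m :: "'a::comm_ring_1 set"
  assumes m: "maximal_ideal m" and a: "a \<notin> m"
  obtains x r where "x \<in> m" "x + a * r = 1"
proof -
  let ?J = "{x + a * r | x r. x \<in> m}"
  have I: "ring_ideal m" using m maximal_ideal_imp_ring_ideal by blast
  have "ring_ideal ?J"
    unfolding ring_ideal_def
  proof (intro conjI ballI allI impI)
    have "0 + a * 0 \<in> ?J" using ring_ideal_zero[OF I] by blast
    then show "0 \<in> ?J" by simp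
  next
    fix y z assume "y \<in> ?J" "z \<in> ?J"
    then obtain x1 r1 x2 r2 where "y = x1 + a * r1" "z = x2 + a * r2" "x1 \<in> m" "x2 \<in> m" by blast
    then show "y + z \<in> ?J"
      by (intro CollectI exI[of _ "x1 + x2"] exI[of _ "r1 + r2"])
        (auto simp: algebra_simps intro: ring_ideal_add[OF I])
  next
    fix r y assume "y \<in> ?J"
    then obtain x1 r1 where "y = x1 + a * r1" "x1 \<in> m" by blast
    then show "r * y \<in> ?J"
      by (intro CollectI exI[of _ "r * x1"] exI[of _ "r * r1"])
        (auto simp: algebra_simps intro: ring_ideal_mult_left[OF I])
  qed
  moreover have "m \<subseteq> ?J"
  proof
    fix y assume "y \<in> m"
    then have "y + a * 0 \<in> ?J" by blast
    then show "y \<in> ?J" by simp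
  qed
  moreover have "?J \<noteq> m"
  proof -
    have "0 + a * 1 \<in> ?J" using ring_ideal_zero[OF I] by blast
    then show ?thesis using a by auto
  qed
  ultimately have "?J = UNIV" using m unfolding maximal_ideal_def by blast
  then have "1 \<in> ?J" by blast
  then obtain x r where "1 = x + a * r" "x \<in> m" by blast
  then show ?thesis using that by simp
qed

lemma maximal_ideal_prime:
  fixes m :: "'a::comm_ring_1 set"
  assumes m: "maximal_ideal m" and ab: "a * b \<in> m" and a: "a \<notin> m"
  shows "b \<in> m"
proof -
  obtain x r where x: "x \<in> m" "x + a * r = 1" using maximal_ideal_coprime[OF m a] .
  have I: "ring_ideal m" using m maximal_ideal_imp_ring_ideal by blast
  have "b = b * (x + a * r)" using x(2) by simp
  also have "\<dots> = x * b + (a * b) * r" by (simp add: algebra_simps)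
  also have "\<dots> \<in> m"
    using ring_ideal_add[OF I ring_ideal_mult_right[OF I x(1)] ring_ideal_mult_right[OF I ab]] .
  finally show ?thesis .
qed

lemma maximal_ideals_comaximal:
  fixes m m' :: "'a::comm_ring_1 set"
  assumes m: "maximal_ideal m" and m': "maximal_ideal m'" and ne: "m \<noteq> m'"
  obtains b where "b \<in> m'" "b - 1 \<in> m"
proof -
  have "\<not> m' \<subseteq> m"
    using m m' ne one_notin_maximal_ideal unfolding maximal_ideal_def by blast
  then obtain a where a: "a \<in> m'" "a \<notin> m" by blast
  obtain x r where x: "x \<in> m" "x + a * r = 1" using maximal_ideal_coprime[OF m a(2)] .
  have "a * r \<in> m'" using a(1) m' maximal_ideal_imp_ring_ideal ring_ideal_mult_right by blast
  moreover have "a * r - 1 = 0 - x" using x(2) by (simp add: algebra_simps)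
  then have "a * r - 1 \<in> m"
    using x(1) m maximal_ideal_imp_ring_ideal ring_ideal_diff ring_ideal_zero by metis
  ultimately show ?thesis using that by blast
qed

lemma ring_ideal_prod_diff_one:
  fixes m :: "'a::comm_ring_1 set"
  assumes I: "ring_ideal m" and f: "\<And>x. x \<in> S \<Longrightarrow> f x - 1 \<in> m"
  shows "prod f S - 1 \<in> m"
  using f
proof (induction S rule: infinite_finite_induct)
  case (insert x F)
  have "prod f (insert x F) - 1 = (f x - 1) * prod f F + (prod f F - 1)"
    using insert by (simp add: algebra_simps)
  also have "\<dots> \<in> m" using insert I by (intro ring_ideal_add ring_ideal_mult_right) auto
  finally show ?case .
qed (use ring_ideal_zero[OF I] in auto)

lemma chinese_remainder_maximal_ideals:
  fixes M :: "'a::comm_ring_1 set set"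
  assumes fin: "finite M" and max: "\<And>m. m \<in> M \<Longrightarrow> maximal_ideal m"
  obtains e where "\<And>c m. m \<in> M \<Longrightarrow> (\<Sum>m'\<in>M. e m' * c m') - c m \<in> m"
proof -
  have "\<forall>m\<in>M. \<forall>m'\<in>M - {m}. \<exists>b. b \<in> m' \<and> b - 1 \<in> m"
    using maximal_ideals_comaximal max by (metis DiffE singletonI)
  then obtain b where b: "\<And>m m'. m \<in> M \<Longrightarrow> m' \<in> M - {m} \<Longrightarrow> b m m' \<in> m' \<and> b m m' - 1 \<in> m"
    by metis
  define e where "e m = prod (b m) (M - {m})" for m
  have e_one: "e m - 1 \<in> m" if "m \<in> M" for m
    unfolding e_def using b that max maximal_ideal_imp_ring_ideal
    by (intro ring_ideal_prod_diff_one) auto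
  have e_zero: "e m \<in> m'" if "m \<in> M" "m' \<in> M - {m}" for m m'
  proof -
    have "e m = b m m' * prod (b m) (M - {m} - {m'})"
      unfolding e_def using fin that by (simp add: prod.remove)
    then show ?thesis
      using b[OF that] that max maximal_ideal_imp_ring_ideal ring_ideal_mult_right by force
  qed
  show ?thesis
  proof (rule that)
    fix c m assume m: "m \<in> M"
    have I: "ring_ideal m" using max[OF m] maximal_ideal_imp_ring_ideal by blast
    have "(\<Sum>m'\<in>M. e m' * c m') - c m = (e m - 1) * c m + (\<Sum>m'\<in>M - {m}. e m' * c m')"
      using sum.remove[OF fin m, of "\<lambda>m'. e m' * c m'"] by (simp add: algebra_simps)
    also have "\<dots> \<in> m"
      using e_one[OF m] e_zero m
      by (intro ring_ideal_add[OF I] ring_ideal_sum[OF I] ring_ideal_mult_right[OF I]) auto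
    finally show "(\<Sum>m'\<in>M. e m' * c m') - c m \<in> m" .
  qed
qed

lemma ring_ideal_subset_maximal_ideal:
  fixes I :: "'a::comm_ring_1 set"
  assumes I: "ring_ideal I" and one: "1 \<notin> I"
  obtains M where "maximal_ideal M" "I \<subseteq> M"
proof -
  let ?A = "{J. ring_ideal J \<and> I \<subseteq> J \<and> 1 \<notin> J}"
  have "\<exists>M\<in>?A. \<forall>X\<in>?A. M \<subseteq> X \<longrightarrow> X = M"
  proof (rule Zorn_Lemma2, intro ballI)
    fix C assume C: "C \<in> chains ?A"
    show "\<exists>U\<in>?A. \<forall>X\<in>C. X \<subseteq> U"
    proof (cases "C = {}")
      case True then show ?thesis using I one by blast
    next
      case False
      have CA: "C \<subseteq> ?A" and ch: "\<And>X Y. X \<in> C \<Longrightarrow> Y \<in> C \<Longrightarrow> X \<subseteq> Y \<or> Y \<subseteq> X"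
        using C unfolding chains_def chain_subset_def by auto
      have "ring_ideal (\<Union>C)" unfolding ring_ideal_def
      proof (intro conjI ballI allI impI)
        show "0 \<in> \<Union>C" using False CA ring_ideal_zero by blast
      next
        fix a b assume "a \<in> \<Union>C" "b \<in> \<Union>C"
        then obtain X Y where XY: "X \<in> C" "Y \<in> C" "a \<in> X" "b \<in> Y" by blast
        then show "a + b \<in> \<Union>C"
          using ch[OF XY(1,2)] CA ring_ideal_add by (metis (no_types, lifting) CollectD UnionI subset_iff)
      next
        fix r a assume "a \<in> \<Union>C"
        then show "r * a \<in> \<Union>C" using CA ring_ideal_mult_left by blast
      qed
      then show ?thesis using CA False by blast
    qed
  qed
  then obtain M where MA: "M \<in> ?A" and Mmax: "\<forall>X\<in>?A. M \<subseteq> X \<longrightarrow> X = M" by blast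
  have "maximal_ideal M"
    unfolding maximal_ideal_def using MA Mmax ring_ideal_one_iff by blast
  then show ?thesis using that MA by blast
qed

lemma unit_if_notin_maximal_ideals:
  fixes x :: "'a::comm_ring_1"
  assumes x: "\<And>m. maximal_ideal m \<Longrightarrow> x \<notin> m"
  obtains y where "x * y = 1"
proof (rule ccontr)
  assume no_inverse: "\<not> thesis"
  let ?I = "range (\<lambda>r. x * r)"
  have "ring_ideal ?I"
    unfolding ring_ideal_def
  proof (intro conjI ballI allI impI)
    show "0 \<in> ?I" by (rule range_eqI[of _ _ 0]) simp
  next
    fix a b assume "a \<in> ?I" "b \<in> ?I"
    then obtain r s where "a = x * r" "b = x * s" by blast
    then show "a + b \<in> ?I" by (intro range_eqI[of _ _ "r + s"]) (simp add: distrib_left)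
  next
    fix c a assume "a \<in> ?I"
    then obtain r where "a = x * r" by blast
    then show "c * a \<in> ?I" by (intro range_eqI[of _ _ "c * r"]) (simp add: mult.left_commute)
  qed
  moreover have "1 \<notin> ?I" using no_inverse that by auto
  ultimately obtain M where "maximal_ideal M" "?I \<subseteq> M" by (rule ring_ideal_subset_maximal_ideal)
  moreover have "x \<in> ?I" by (rule range_eqI[of _ _ 1]) simp
  ultimately show False using x by blast
qed

lemma unimodular_notin_maximal_ideal:
  assumes "unimodular u" and m: "maximal_ideal m"
  obtains j where "j < dim_vec u" "u $ j \<notin> m"
proof (rule ccontr)
  assume "\<not> thesis"
  then have "\<And>j. j < dim_vec u \<Longrightarrow> u $ j \<in> m" using that by blast
  moreover obtain w where "dim_vec w = dim_vec u" "u \<bullet> w = 1" using assms(1) unfolding unimodular_def by blast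
  ultimately show False
    using scalar_prod_in_ideal m maximal_ideal_imp_ring_ideal one_notin_maximal_ideal by metis
qed

section \<open>The form \<open>(2) \<perp> \<psi>\<^sub>n\<close>\<close>

text \<open>Coordinates are 0-based: coordinate 0 carries the block \<open>(2)\<close>, and the hyperbolic pairs of
  \<open>\<psi>\<^sub>n\<close> are the coordinates \<open>2i - 1, 2i\<close> for \<open>1 \<le> i \<le> n\<close>.\<close>

definition partner :: "nat \<Rightarrow> nat" where
  "partner j = (if odd j then j + 1 else j - 1)"

lemma partner_in_range:
  assumes "j \<in> {1..2*n}"
  shows "partner j \<in> {1..2*n}"
proof (cases "odd j")
  case True
  have "1 \<le> j" "j \<le> 2*n" using assms by auto
  then have "j < 2*n" using True by presburger
  then show ?thesis using True unfolding partner_def by auto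
next
  case False
  have "1 \<le> j" "j \<le> 2*n" using assms by auto
  then have "j \<ge> 2" using False by presburger
  then show ?thesis using False assms unfolding partner_def by auto
qed

lemma partner_partner: "1 \<le> j \<Longrightarrow> partner (partner j) = j"
  unfolding partner_def by (auto elim: oddE)

lemma partner_neq: "1 \<le> j \<Longrightarrow> partner j \<noteq> j"
  unfolding partner_def by auto

lemma psi_tilde_index:
  assumes ab: "a < 2*n" "b < 2*n"
  shows "(psi_tilde n :: 'a::comm_ring_1 mat) $$ (a,b) =
    (if (even a \<and> b = a + 1) \<or> (odd a \<and> a = b + 1) then 1 else 0)"
proof -
  let ?E = "\<lambda>i. unit_mat (2*n) (2*i-1) (2*i) + unit_mat (2*n) (2*i) (2*i-1) :: 'a mat"
  let ?c = "if (even a \<and> b = a + 1) \<or> (odd a \<and> a = b + 1) then 1 else 0 :: 'a"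
  have "psi_tilde n $$ (a,b) = (\<Sum>i\<in>{1..n}. ?E i $$ (a,b))"
    unfolding psi_tilde_def using ab by simp
  also have "\<dots> = (\<Sum>i\<in>{1..n}. if i = a div 2 + 1 then ?c else 0)"
  proof (rule sum.cong[OF refl])
    fix i assume i: "i \<in> {1..n}"
    have c1: "(a = 2*i-1-1 \<and> b = 2*i-1) \<longleftrightarrow> (i = a div 2 + 1 \<and> even a \<and> b = a + 1)"
      using i by (auto elim!: evenE)
    have c2: "(a = 2*i-1 \<and> b = 2*i-1-1) \<longleftrightarrow> (i = a div 2 + 1 \<and> odd a \<and> a = b + 1)"
      using i by (auto elim!: oddE)
    have "?E i $$ (a,b) = (if a = 2*i-1-1 \<and> b = 2*i-1 then 1 else 0)
        + (if a = 2*i-1 \<and> b = 2*i-1-1 then 1 else 0)"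
      using ab by (simp only: index_add_mat unit_mat_def dim_row_mat dim_col_mat index_mat case_prod_conv)
    also have "\<dots> = (if i = a div 2 + 1 then ?c else 0)"
      unfolding c1 c2 by (cases "even a") simp_all
    finally show "?E i $$ (a,b) = (if i = a div 2 + 1 then ?c else 0)" .
  qed
  also have "\<dots> = ?c"
  proof -
    have "a div 2 + 1 \<in> {1..n}" using ab by auto
    then show ?thesis by (simp only: sum.delta finite_atLeastAtMost if_True)
  qed
  finally show ?thesis .
qed

lemma psi_tilde_dim[simp]: "dim_row (psi_tilde n) = 2*n" "dim_col (psi_tilde n) = 2*n"
  unfolding psi_tilde_def by auto

lemma phi_tilde_dim[simp]: "dim_row (phi_tilde n) = 2*n+1" "dim_col (phi_tilde n) = 2*n+1"
  unfolding phi_tilde_def by auto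

text \<open>The dimension \<open>2n + 1\<close> is a separate parameter \<open>N\<close> so that the simplifier does not
  rewrite it to \<open>Suc (2 * n)\<close> inside carrier conditions.\<close>

locale odd_form =
  fixes n N :: nat
  assumes dim_eq: "N = 2*n+1"
begin

lemma partner_less_dim: "i \<in> {1..2*n} \<Longrightarrow> partner i < N" "i \<in> {1..2*n} \<Longrightarrow> i < N"
  using partner_in_range[of i n] dim_eq by auto

lemma phi_tilde_carrier: "phi_tilde n \<in> carrier_mat N N"
  by (rule carrier_matI) (simp_all add: dim_eq)

lemma phi_tilde_index:
  assumes "i < N" "j < N"
  shows "(phi_tilde n :: 'a::comm_ring_1 mat) $$ (i,j) =
     (if i = 0 then (if j = 0 then 2 else 0) else if j \<noteq> 0 \<and> j = partner i then 1 else 0)"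
  using assms unfolding dim_eq phi_tilde_def by (auto simp: psi_tilde_index partner_def; presburger)

lemma phi_tilde_mult_vec_carrier: "a \<in> carrier_vec N \<Longrightarrow> phi_tilde n *\<^sub>v a \<in> carrier_vec N"
  using phi_tilde_carrier by (rule mult_mat_vec_carrier)

lemma phi_tilde_mult_vec_index:
  assumes a: "a \<in> carrier_vec N" and j: "j < N"
  shows "(phi_tilde n *\<^sub>v a) $ j = (if j = 0 then 2 * a $ 0 else a $ partner j)"
proof -
  let ?t = "if j = 0 then 0 else partner j"
  have range: "j \<noteq> 0 \<Longrightarrow> partner j \<noteq> 0 \<and> partner j < N"
    using j partner_in_range[of j n] dim_eq by auto
  have "(phi_tilde n *\<^sub>v a) $ j = (\<Sum>k\<in>{0..<N}. phi_tilde n $$ (j,k) * a $ k)"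
    using a j dim_eq by (simp add: scalar_prod_def)
  also have "\<dots> = (\<Sum>k\<in>{0..<N}. if k = ?t then (if j = 0 then 2 * a $ 0 else a $ partner j) else 0)"
    using j range by (intro sum.cong refl) (auto simp: phi_tilde_index)
  also have "\<dots> = (if j = 0 then 2 * a $ 0 else a $ partner j)"
    using range dim_eq by (simp only: sum.delta finite_atLeastLessThan atLeastLessThan_iff) simp
  finally show ?thesis .
qed

lemma bform_expand:
  assumes a: "a \<in> carrier_vec N" and b: "b \<in> carrier_vec N"
  shows "bform n a b = 2 * a $ 0 * b $ 0 + (\<Sum>i\<in>{1..2*n}. a $ i * b $ partner i)"
proof -
  have "bform n a b = (\<Sum>i\<in>{0..<N}. a $ i * (if i = 0 then 2 * b $ 0 else b $ partner i))"
    unfolding bform_def scalar_prod_def using b phi_tilde_carrier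
    by (intro sum.cong) (auto simp: phi_tilde_mult_vec_index simp del: index_mult_mat_vec)
  also have "{0..<N} = insert 0 {1..2*n}" using dim_eq by auto
  also have "(\<Sum>i\<in>insert 0 {1..2*n}. a $ i * (if i = 0 then 2 * b $ 0 else b $ partner i))
      = a $ 0 * (2 * b $ 0) + (\<Sum>i\<in>{1..2*n}. a $ i * b $ partner i)"
    by (subst sum.insert) auto
  finally show ?thesis by (simp add: mult.assoc mult.left_commute)
qed

lemma bform_commute:
  assumes a: "a \<in> carrier_vec N" and b: "b \<in> carrier_vec N"
  shows "bform n a b = bform n b a"
proof -
  have "(\<Sum>i\<in>{1..2*n}. a $ i * b $ partner i) = (\<Sum>i\<in>{1..2*n}. b $ i * a $ partner i)"
  proof (rule sum.reindex_bij_witness[of _ partner partner])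
    fix i assume i: "i \<in> {1..2*n}"
    then have "partner (partner i) = i" using partner_partner by simp
    then show "partner (partner i) = i" "partner (partner i) = i"
      "b $ partner i * a $ partner (partner i) = a $ i * b $ partner i"
      by (simp_all add: mult.commute)
    show "partner i \<in> {1..2*n}" "partner i \<in> {1..2*n}" using partner_in_range[OF i] by simp_all
  qed
  then show ?thesis using bform_expand[OF a b] bform_expand[OF b a] by (simp add: mult.commute)
qed

lemma bform_unit_vec_left:
  assumes x: "x \<in> carrier_vec N" and j: "j < N"
  shows "bform n (unit_vec N j) x = (if j = 0 then 2 * x $ 0 else x $ partner j)"
  unfolding bform_def
  using scalar_prod_left_unit[OF phi_tilde_mult_vec_carrier[OF x] j] phi_tilde_mult_vec_index[OF x j]
  by simp

lemma bform_add_left: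
  "x \<in> carrier_vec N \<Longrightarrow> y \<in> carrier_vec N \<Longrightarrow> z \<in> carrier_vec N \<Longrightarrow>
    bform n (x + y) z = bform n x z + bform n y z"
  unfolding bform_def by (simp add: add_scalar_prod_distrib phi_tilde_mult_vec_carrier)

lemma bform_diff_left:
  "x \<in> carrier_vec N \<Longrightarrow> y \<in> carrier_vec N \<Longrightarrow> z \<in> carrier_vec N \<Longrightarrow>
    bform n (x - y) z = bform n x z - bform n y z"
  unfolding bform_def by (simp add: minus_scalar_prod_distrib phi_tilde_mult_vec_carrier)

lemma bform_smult_left:
  "x \<in> carrier_vec N \<Longrightarrow> z \<in> carrier_vec N \<Longrightarrow> bform n (c \<cdot>\<^sub>v x) z = c * bform n x z"
  unfolding bform_def by (simp add: phi_tilde_mult_vec_carrier)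

lemma bform_zero_left: "z \<in> carrier_vec N \<Longrightarrow> bform n (0\<^sub>v N) z = 0"
  unfolding bform_def by (simp add: phi_tilde_mult_vec_carrier)

lemma bform_add_right:
  "x \<in> carrier_vec N \<Longrightarrow> y \<in> carrier_vec N \<Longrightarrow> z \<in> carrier_vec N \<Longrightarrow>
    bform n z (x + y) = bform n z x + bform n z y"
  by (metis add_carrier_vec bform_add_left bform_commute)

lemma bform_diff_right:
  "x \<in> carrier_vec N \<Longrightarrow> y \<in> carrier_vec N \<Longrightarrow> z \<in> carrier_vec N \<Longrightarrow>
    bform n z (x - y) = bform n z x - bform n z y"
  by (metis minus_carrier_vec bform_diff_left bform_commute)

lemma bform_smult_right:
  "x \<in> carrier_vec N \<Longrightarrow> z \<in> carrier_vec N \<Longrightarrow> bform n z (c \<cdot>\<^sub>v x) = c * bform n z x"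
  by (metis smult_carrier_vec bform_smult_left bform_commute)

lemmas bform_linear = bform_add_left bform_add_right bform_diff_left bform_diff_right
  bform_smult_left bform_smult_right bform_zero_left

lemma bform_unit_vec_right:
  "x \<in> carrier_vec N \<Longrightarrow> j < N \<Longrightarrow> bform n x (unit_vec N j) = (if j = 0 then 2 * x $ 0 else x $ partner j)"
  by (metis bform_unit_vec_left bform_commute unit_vec_carrier)

lemma bform_eq_sum_unit_vec:
  assumes x: "x \<in> carrier_vec N" and y: "y \<in> carrier_vec N"
  shows "bform n y x = (\<Sum>j<N. bform n y (unit_vec N j) * x $ j)"
proof -
  have "bform n y x = (\<Sum>j<N. x $ j * (phi_tilde n *\<^sub>v y) $ j)"
    using bform_commute[OF y x] unfolding bform_def scalar_prod_def by (simp add: lessThan_atLeast0 dim_eq)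
  also have "\<dots> = (\<Sum>j<N. bform n y (unit_vec N j) * x $ j)"
    using y by (intro sum.cong) (auto simp: bform_unit_vec_right phi_tilde_mult_vec_index
        simp del: index_mult_mat_vec)
  finally show ?thesis .
qed

lemma bform_in_ideal:
  assumes "ring_ideal I" "d \<in> carrier_vec N" "y \<in> carrier_vec N" "\<And>j. j < N \<Longrightarrow> d $ j \<in> I"
  shows "bform n d y \<in> I"
  unfolding bform_def using assms dim_eq by (intro scalar_prod_in_ideal) auto

lemma esd_carrier[simp]:
  "u \<in> carrier_vec k \<Longrightarrow> v \<in> carrier_vec k \<Longrightarrow> x \<in> carrier_vec k \<Longrightarrow> esd n u v x \<in> carrier_vec k"
  unfolding esd_def by simp

lemma esd_index:
  "u \<in> carrier_vec N \<Longrightarrow> v \<in> carrier_vec N \<Longrightarrow> x \<in> carrier_vec N \<Longrightarrow> i < N \<Longrightarrow>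
    esd n u v x $ i = x $ i + bform n v x * u $ i - bform n u x * v $ i - qform n v * bform n u x * u $ i"
  unfolding esd_def by simp

lemma bform_esd_right:
  assumes "u \<in> carrier_vec N" "v \<in> carrier_vec N" "x \<in> carrier_vec N" "y \<in> carrier_vec N"
  shows "bform n y (esd n u v x) = bform n y x + bform n v x * bform n y u - bform n u x * bform n y v
     - qform n v * bform n u x * bform n y u"
  using assms unfolding esd_def by (simp add: bform_linear)

lemma bform_esd_left:
  assumes "u \<in> carrier_vec N" "v \<in> carrier_vec N" "x \<in> carrier_vec N" "y \<in> carrier_vec N"
  shows "bform n (esd n u v x) y = bform n x y + bform n v x * bform n u y - bform n u x * bform n v y
     - qform n v * bform n u x * bform n u y"
proof -
  have "bform n (esd n u v x) y = bform n y (esd n u v x)"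
    using assms by (intro bform_commute) auto
  also have "\<dots> = bform n y x + bform n v x * bform n y u - bform n u x * bform n y v
     - qform n v * bform n u x * bform n y u"
    by (rule bform_esd_right[OF assms])
  finally show ?thesis
    using assms bform_commute[of y x] bform_commute[of y u] bform_commute[of y v] by simp
qed

end

locale odd_orthogonal = odd_form +
  fixes half :: "'a::comm_ring_1"
  assumes two_mult_half: "2 * half = 1"
begin

lemma qform_eq_half: "qform n (a :: 'a vec) = half * bform n a a"
  unfolding qform_def
proof (rule the_equality)
  show "2 * (half * bform n a a) = bform n a a"
    using two_mult_half by (simp add: mult.assoc[symmetric])
next
  fix r assume r: "2 * r = bform n a a"
  have "r = (2 * half) * r" using two_mult_half by simp
  also have "\<dots> = half * (2 * r)" by (simp add: algebra_simps)
  finally show "r = half * bform n a a" using r by simp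
qed

lemma bform_self: "bform n a a = 2 * qform n (a :: 'a vec)"
  using two_mult_half by (simp add: qform_eq_half mult.assoc[symmetric])

lemma qform_add:
  fixes x y :: "'a vec"
  assumes x: "x \<in> carrier_vec N" and y: "y \<in> carrier_vec N"
  shows "qform n (x + y) = qform n x + qform n y + bform n x y"
proof -
  have "qform n (x + y) = half * (bform n x x + bform n y y + 2 * bform n x y)"
    using x y by (simp add: qform_eq_half bform_linear bform_commute[of y x] algebra_simps)
  also have "\<dots> = qform n x + qform n y + (2 * half) * bform n x y"
    by (simp add: qform_eq_half algebra_simps)
  finally show ?thesis using two_mult_half by simp
qed

lemma qform_smult: "(x :: 'a vec) \<in> carrier_vec N \<Longrightarrow> qform n (c \<cdot>\<^sub>v x) = c * c * qform n x"
  by (simp add: qform_eq_half bform_linear algebra_simps)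

lemma qform_zero: "qform n (0\<^sub>v N :: 'a vec) = 0"
  by (simp add: qform_eq_half bform_linear)

lemma qform_unit_vec_zero: "qform n (unit_vec N 0 :: 'a vec) = 1"
proof -
  have "0 < N" using dim_eq by simp
  then show ?thesis using two_mult_half by (simp add: qform_eq_half bform_unit_vec_left mult.commute)
qed

lemma qform_unit_vec:
  assumes "a \<in> {1..2*n}"
  shows "qform n (unit_vec N a :: 'a vec) = 0"
  using assms partner_neq[of a] partner_less_dim[OF assms] by (simp add: qform_eq_half bform_unit_vec_left)

lemma esd_add:
  fixes u :: "'a vec"
  assumes u: "u \<in> carrier_vec N" and v: "v \<in> carrier_vec N" and w: "w \<in> carrier_vec N"
    and x: "x \<in> carrier_vec N" and qu: "qform n u = 0" and uv: "bform n u v = 0" and uw: "bform n u w = 0"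
  shows "esd n u v (esd n u w x) = esd n u (v + w) x"
proof (rule eq_vecI)
  have "bform n v u = 0" "bform n w u = 0" "bform n u u = 0" "bform n w v = bform n v w"
    using uv uw qu bform_commute[OF u v] bform_commute[OF u w] bform_commute[OF v w] bform_self[of u]
    by auto
  moreover fix i assume "i < dim_vec (esd n u (v + w) x)"
  then have "i < N" using u by (simp add: esd_def)
  ultimately show "esd n u v (esd n u w x) $ i = esd n u (v + w) x $ i"
    using u v w x uv uw
    by (simp add: esd_index bform_esd_right bform_linear qform_add algebra_simps)
qed (use u in \<open>simp add: esd_def\<close>)

lemma esd_zero:
  fixes u :: "'a vec"
  assumes "u \<in> carrier_vec N" "x \<in> carrier_vec N"
  shows "esd n u (0\<^sub>v N) x = x"
  using assms by (intro eq_vecI) (simp_all add: esd_def bform_linear qform_zero)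

lemma esd_self_smult:
  fixes u :: "'a vec"
  assumes "u \<in> carrier_vec N" "x \<in> carrier_vec N" "qform n u = 0"
  shows "esd n u (c \<cdot>\<^sub>v u) x = x"
  using assms by (intro eq_vecI) (simp_all add: esd_def bform_linear qform_smult algebra_simps)

lemma esd_smult:
  fixes u :: "'a vec"
  assumes "u \<in> carrier_vec N" "v \<in> carrier_vec N" "x \<in> carrier_vec N"
  shows "esd n (c \<cdot>\<^sub>v u) v x = esd n u (c \<cdot>\<^sub>v v) x"
  using assms by (intro eq_vecI) (simp_all add: esd_def bform_linear qform_smult algebra_simps)

lemma esd_inverse:
  fixes u :: "'a vec"
  assumes u: "u \<in> carrier_vec N" and v: "v \<in> carrier_vec N" and x: "x \<in> carrier_vec N"
    and qu: "qform n u = 0" and uv: "bform n u v = 0"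
  shows "esd n u ((-1) \<cdot>\<^sub>v v) (esd n u v x) = x"
proof -
  have "bform n u ((-1) \<cdot>\<^sub>v v) = 0" using uv u v by (simp add: bform_linear)
  then have "esd n u ((-1) \<cdot>\<^sub>v v) (esd n u v x) = esd n u ((-1) \<cdot>\<^sub>v v + v) x"
    using esd_add[OF u _ v x qu _ uv] v by simp
  also have "(-1) \<cdot>\<^sub>v v + v = 0\<^sub>v N" using v by (intro eq_vecI) auto
  finally show ?thesis using esd_zero[OF u x] by simp
qed

lemma bform_esd:
  fixes u :: "'a vec"
  assumes u: "u \<in> carrier_vec N" and v: "v \<in> carrier_vec N" and x: "x \<in> carrier_vec N"
    and y: "y \<in> carrier_vec N" and qu: "qform n u = 0" and uv: "bform n u v = 0"
  shows "bform n (esd n u v x) (esd n u v y) = bform n x y"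
proof -
  have "bform n v u = 0" "bform n u u = 0" "bform n v v = 2 * qform n v"
    using uv qu bform_commute[OF u v] bform_self by auto
  then show ?thesis
    using u v x y uv bform_commute[OF x u] bform_commute[OF x v]
    by (simp add: bform_esd_left bform_esd_right algebra_simps)
qed

lemma qform_esd:
  fixes u :: "'a vec"
  assumes "u \<in> carrier_vec N" "v \<in> carrier_vec N" "x \<in> carrier_vec N" "qform n u = 0" "bform n u v = 0"
  shows "qform n (esd n u v x) = qform n x"
  using bform_esd[OF assms(1-3) assms(3-5)] by (simp add: qform_eq_half)

lemma esd_conj:
  fixes a :: "'a vec"
  assumes a: "a \<in> carrier_vec N" and b: "b \<in> carrier_vec N" and u: "u \<in> carrier_vec N"
    and v: "v \<in> carrier_vec N" and x: "x \<in> carrier_vec N"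
    and qa: "qform n a = 0" and ab: "bform n a b = 0"
  shows "esd n a b (esd n u v x) = esd n (esd n a b u) (esd n a b v) (esd n a b x)"
proof (rule eq_vecI)
  fix i assume "i < dim_vec (esd n (esd n a b u) (esd n a b v) (esd n a b x))"
  then have i: "i < N" using a b u by (simp add: esd_def)
  have "esd n (esd n a b u) (esd n a b v) (esd n a b x) $ i =
     esd n a b x $ i + bform n v x * esd n a b u $ i - bform n u x * esd n a b v $ i
     - qform n v * bform n u x * esd n a b u $ i"
    using esd_index[OF _ _ _ i, of "esd n a b u" "esd n a b v" "esd n a b x"] a b u v x
      bform_esd[OF a b v x qa ab] bform_esd[OF a b u x qa ab] qform_esd[OF a b v qa ab]
    by simp
  moreover have "bform n u b = bform n b u" "bform n v b = bform n b v"
    "bform n u a = bform n a u" "bform n v a = bform n a v"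
    using bform_commute a b u v by auto
  ultimately show "esd n a b (esd n u v x) $ i = esd n (esd n a b u) (esd n a b v) (esd n a b x) $ i"
    using a b u v x i by (simp add: esd_index bform_esd_right algebra_simps)
qed (use a b u in \<open>simp add: esd_def\<close>)

end

section \<open>The odd elementary orthogonal group\<close>

text \<open>Elements of \<open>EO\<close> are handled through the maps they induce on \<open>R\<^sup>2\<^sup>s\<^sup>+\<^sup>1\<close>, so that
  products and conjugates of transvections can be computed pointwise.\<close>

definition EO_maps :: "nat \<Rightarrow> ('a::comm_ring_1 vec \<Rightarrow> 'a vec) set" where
  "EO_maps s = {f. \<exists>A\<in>EO s. \<forall>x\<in>carrier_vec (2*s+1). f x = A *\<^sub>v x}"

definition esd_elementary :: "nat \<Rightarrow> 'a::comm_ring_1 vec \<Rightarrow> bool" where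
  "esd_elementary s u \<longleftrightarrow> (\<forall>v\<in>carrier_vec (2*s+1). bform s u v = 0 \<longrightarrow> esd s u v \<in> EO_maps s)"

lemma F1_carrier: "F1 s i c \<in> carrier_mat (2*s+1) (2*s+1)"
  unfolding F1_def unit_mat_def by (intro add_carrier_mat smult_carrier_mat minus_carrier_mat) auto

lemma F2_carrier: "F2 s i c \<in> carrier_mat (2*s+1) (2*s+1)"
  unfolding F2_def unit_mat_def by (intro add_carrier_mat smult_carrier_mat minus_carrier_mat) auto

lemma EO_gens_carrier: "g \<in> EO_gens s \<Longrightarrow> g \<in> carrier_mat (2*s+1) (2*s+1)"
  unfolding EO_gens_def using F1_carrier F2_carrier by blast

lemma EO_gens_subset_EO: "g \<in> EO_gens s \<Longrightarrow> g \<in> EO s"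
  using EO.EO_gen[OF _ EO.EO_one] EO_gens_carrier right_mult_one_mat by metis

context odd_form
begin

lemma EO_carrier: "A \<in> EO n \<Longrightarrow> A \<in> carrier_mat N N"
proof (induction rule: EO.induct)
  case EO_one
  then show ?case using dim_eq by simp
next
  case (EO_gen g M)
  then show ?case using EO_gens_carrier[OF EO_gen(1)] dim_eq by (metis mult_carrier_mat)
next
  case (EO_inv g h M)
  then show ?case using dim_eq by (metis mult_carrier_mat)
qed

lemma EO_mult: "A \<in> EO n \<Longrightarrow> B \<in> EO n \<Longrightarrow> A * B \<in> EO n"
proof (induction rule: EO.induct)
  case EO_one
  then show ?case by (metis EO_carrier dim_eq left_mult_one_mat)
next
  case (EO_gen g M)
  have "g * M * B = g * (M * B)"
    using EO_gens_carrier[OF EO_gen(1)] EO_carrier[OF EO_gen(2)] EO_carrier[OF EO_gen(4)] dim_eq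
    by (simp add: assoc_mult_mat)
  then show ?case using EO.EO_gen[OF EO_gen(1) EO_gen(3)[OF EO_gen(4)]] by simp
next
  case (EO_inv g h M)
  have "h * M * B = h * (M * B)"
    using EO_inv(2) EO_carrier[OF EO_inv(5)] EO_carrier[OF EO_inv(7)] dim_eq
    by (simp add: assoc_mult_mat)
  then show ?case using EO.EO_inv[OF EO_inv(1-4) EO_inv(6)[OF EO_inv(7)]] by simp
qed

lemma EO_maps_iff: "f \<in> EO_maps n \<longleftrightarrow> (\<exists>A\<in>EO n. \<forall>x\<in>carrier_vec N. f x = A *\<^sub>v x)"
  unfolding EO_maps_def dim_eq by simp

lemma esd_elementary_iff:
  "esd_elementary n u \<longleftrightarrow> (\<forall>v\<in>carrier_vec N. bform n u v = 0 \<longrightarrow> esd n u v \<in> EO_maps n)"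
  unfolding esd_elementary_def dim_eq by simp

lemma EO_maps_comp:
  assumes "f \<in> EO_maps n" "g \<in> EO_maps n"
  shows "f \<circ> g \<in> EO_maps n"
proof -
  obtain A B where A: "A \<in> EO n" "\<And>x. x \<in> carrier_vec N \<Longrightarrow> f x = A *\<^sub>v x"
    and B: "B \<in> EO n" "\<And>x. x \<in> carrier_vec N \<Longrightarrow> g x = B *\<^sub>v x"
    using assms unfolding EO_maps_iff by blast
  have "(f \<circ> g) x = (A * B) *\<^sub>v x" if "x \<in> carrier_vec N" for x
    using that A B EO_carrier[OF A(1)] EO_carrier[OF B(1)] by simp
  then show ?thesis using EO_mult[OF A(1) B(1)] unfolding EO_maps_iff by blast
qed

lemma EO_maps_cong: "f \<in> EO_maps n \<Longrightarrow> (\<And>x. x \<in> carrier_vec N \<Longrightarrow> f x = g x) \<Longrightarrow> g \<in> EO_maps n"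
  unfolding EO_maps_iff by metis

lemma EO_maps_if_identity: "(\<And>x. x \<in> carrier_vec N \<Longrightarrow> f x = x) \<Longrightarrow> f \<in> EO_maps n"
  unfolding EO_maps_iff using EO.EO_one[of n] dim_eq by force

lemma esd_mat_eq: "esd_mat n u v = mat_of_cols N (map (\<lambda>j. esd n u v (unit_vec N j)) [0..<N])"
  unfolding esd_mat_def dim_eq ..

lemma esd_mat_carrier: "esd_mat n u v \<in> carrier_mat N N"
  unfolding esd_mat_eq using mat_of_cols_carrier(1)[of N "map (\<lambda>j. esd n u v (unit_vec N j)) [0..<N]"]
  by simp

lemma esd_mat_index:
  assumes "i < N" "j < N"
  shows "esd_mat n u v $$ (i,j) = esd n u v (unit_vec N j) $ i"
  unfolding esd_mat_eq using assms by (simp add: mat_of_cols_index del: upt_Suc)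

lemma esd_mat_mult_vec:
  assumes u: "u \<in> carrier_vec N" and v: "v \<in> carrier_vec N" and x: "x \<in> carrier_vec N"
  shows "esd_mat n u v *\<^sub>v x = esd n u v x"
proof (rule eq_vecI)
  fix r assume "r < dim_vec (esd n u v x)"
  then have r: "r < N" using u by (simp add: esd_def)
  have "(esd_mat n u v *\<^sub>v x) $ r = (\<Sum>j<N. esd n u v (unit_vec N j) $ r * x $ j)"
    using r x esd_mat_carrier[of u v]
    by (simp add: scalar_prod_def esd_mat_index lessThan_atLeast0)
  also have "\<dots> = (\<Sum>j<N. (if j = r then x $ j else 0) + u $ r * (bform n v (unit_vec N j) * x $ j)
       - v $ r * (bform n u (unit_vec N j) * x $ j) - qform n v * u $ r * (bform n u (unit_vec N j) * x $ j))"
    using u v r by (intro sum.cong refl) (auto simp: esd_index algebra_simps)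
  also have "\<dots> = x $ r + u $ r * bform n v x - v $ r * bform n u x - qform n v * u $ r * bform n u x"
    using r u v x
    by (simp add: sum.distrib sum_subtractf sum_distrib_left[symmetric] bform_eq_sum_unit_vec[of x])
  also have "\<dots> = esd n u v x $ r" using esd_index[OF u v x r] by (simp add: algebra_simps)
  finally show "(esd_mat n u v *\<^sub>v x) $ r = esd n u v x $ r" .
qed (use u esd_mat_carrier[of u v] in \<open>auto simp: esd_def carrier_matD\<close>)

lemma esd_mat_in_EO:
  assumes u: "u \<in> carrier_vec N" and v: "v \<in> carrier_vec N" and f: "esd n u v \<in> EO_maps n"
  shows "esd_mat n u v \<in> EO n"
proof -
  obtain A where A: "A \<in> EO n" "\<And>x. x \<in> carrier_vec N \<Longrightarrow> esd n u v x = A *\<^sub>v x"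
    using f unfolding EO_maps_iff by blast
  have A_carrier: "A \<in> carrier_mat N N" using EO_carrier[OF A(1)] .
  have "A = esd_mat n u v"
  proof (rule eq_matI)
    fix i j assume "i < dim_row (esd_mat n u v)" "j < dim_col (esd_mat n u v)"
    then have i: "i < N" and j: "j < N" using esd_mat_carrier[of u v] by auto
    have "A $$ (i,j) = (A *\<^sub>v unit_vec N j) $ i" using A_carrier i j by simp
    also have "\<dots> = esd_mat n u v $$ (i,j)" using A(2)[of "unit_vec N j"] esd_mat_index[OF i j, of u v] by simp
    finally show "A $$ (i,j) = esd_mat n u v $$ (i,j)" .
  qed (use A_carrier esd_mat_carrier[of u v] in auto)
  then show ?thesis using A(1) by simp
qed

end

context odd_orthogonal
begin

text \<open>Both kinds of generators \<open>F\<^sup>1\<^sub>i(\<lambda>)\<close> and \<open>F\<^sup>2\<^sub>i(\<lambda>)\<close> are the transvections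
  \<open>\<sigma>\<^sub>e\<^sub>a\<^sub>,\<^sub>-\<^sub>\<lambda>\<^sub>e\<^sub>0\<close>, for \<open>a = 2i - 1\<close> and \<open>a = 2i\<close> respectively.\<close>

lemma esd_mat_root:
  fixes c :: 'a
  assumes a: "a \<in> {1..2*n}"
  shows "esd_mat n (unit_vec N a) ((-c) \<cdot>\<^sub>v unit_vec N 0) = 1\<^sub>m N + c \<cdot>\<^sub>m (unit_mat N 1 (partner a + 1)
    - 2 \<cdot>\<^sub>m unit_mat N (a + 1) 1 - c \<cdot>\<^sub>m unit_mat N (a + 1) (partner a + 1))"
    (is "?L = ?R")
proof (rule eq_matI)
  show dims: "dim_row ?L = dim_row ?R" "dim_col ?L = dim_col ?R"
    using esd_mat_carrier[of "unit_vec N a" "(-c) \<cdot>\<^sub>v unit_vec N 0"] by (auto simp: unit_mat_def)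
  fix r j assume "r < dim_row ?R" "j < dim_col ?R"
  then have r: "r < N" and j: "j < N" by (simp_all add: unit_mat_def)
  have a_N: "a < N" "partner a < N" "a \<noteq> 0" "partner a \<noteq> 0" "partner a \<noteq> a"
    using a partner_less_dim[OF a] partner_in_range[OF a] partner_neq[of a] by auto
  have R: "?R $$ (r,j) = (if r = j then 1 else 0) + c * ((if r = 0 \<and> j = partner a then 1 else 0)
     - 2 * (if r = a \<and> j = 0 then 1 else 0) - c * (if r = a \<and> j = partner a then 1 else 0))"
    using r j by (simp add: unit_mat_def)
  have L: "?L $$ (r,j) = unit_vec N j $ r
      + bform n ((-c) \<cdot>\<^sub>v unit_vec N 0) (unit_vec N j) * unit_vec N a $ r
      - bform n (unit_vec N a) (unit_vec N j) * ((-c) \<cdot>\<^sub>v unit_vec N 0) $ r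
      - qform n ((-c) \<cdot>\<^sub>v unit_vec N 0) * bform n (unit_vec N a) (unit_vec N j) * unit_vec N a $ r"
    unfolding esd_mat_index[OF r j] by (rule esd_index) (use r in simp_all)
  have b0: "bform n ((-c) \<cdot>\<^sub>v unit_vec N 0) (unit_vec N j) = - c * (if j = 0 then 2 else 0)"
    using j by (simp add: bform_linear bform_unit_vec_left)
  have ba: "bform n (unit_vec N a) (unit_vec N j) = (if j = partner a then 1 else 0)"
    using j a_N by (simp add: bform_unit_vec_left)
  have q: "qform n ((-c) \<cdot>\<^sub>v unit_vec N 0) = c * c"
    by (simp add: qform_smult qform_unit_vec_zero)
  have coords: "unit_vec N j $ r = (if r = j then 1 else 0)" "unit_vec N a $ r = (if r = a then 1 else 0)"
    "((-c) \<cdot>\<^sub>v unit_vec N 0) $ r = - c * (if r = 0 then 1 else 0)"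
    using r j a_N by auto
  show "?L $$ (r,j) = ?R $$ (r,j)"
    unfolding L R b0 ba q coords using a_N
    by (cases "r = 0"; cases "j = 0"; cases "r = a"; cases "j = partner a") simp_all
qed

lemma esd_root_in_EO:
  fixes c :: 'a
  assumes a: "a \<in> {1..2*n}"
  shows "esd n (unit_vec N a) (c \<cdot>\<^sub>v unit_vec N 0) \<in> EO_maps n"
proof -
  let ?M = "esd_mat n (unit_vec N a) (c \<cdot>\<^sub>v unit_vec N 0)"
  have M: "?M = 1\<^sub>m N + (-c) \<cdot>\<^sub>m (unit_mat N 1 (partner a + 1)
    - 2 \<cdot>\<^sub>m unit_mat N (a + 1) 1 - (-c) \<cdot>\<^sub>m unit_mat N (a + 1) (partner a + 1))"
    using esd_mat_root[OF a, of "-c"] by simp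
  have "?M \<in> EO_gens n"
  proof (cases "odd a")
    case True
    define i where "i = (a + 1) div 2"
    have i: "1 \<le> i" "i \<le> n" "a + 1 = 2*i" "partner a + 1 = 2*i + 1"
      using a True unfolding i_def partner_def by (auto elim!: oddE)
    then have "?M = F1 n i (-c)" using M unfolding F1_def dim_eq[symmetric] by simp
    then show ?thesis unfolding EO_gens_def using i by blast
  next
    case False
    define i where "i = a div 2"
    have i: "1 \<le> i" "i \<le> n" "a + 1 = 2*i + 1" "partner a + 1 = 2*i"
      using a False unfolding i_def partner_def by (auto elim!: evenE)
    then have "?M = F2 n i (-c)" using M unfolding F2_def dim_eq[symmetric] by simp
    then show ?thesis unfolding EO_gens_def using i by blast
  qed
  moreover have "\<forall>x\<in>carrier_vec N. esd n (unit_vec N a) (c \<cdot>\<^sub>v unit_vec N 0) x = ?M *\<^sub>v x"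
    by (simp add: esd_mat_mult_vec)
  ultimately show ?thesis unfolding EO_maps_iff using EO_gens_subset_EO by blast
qed

lemma esd_conj_in_EO:
  fixes a :: "'a vec"
  assumes a: "a \<in> carrier_vec N" and b: "b \<in> carrier_vec N" and u: "u \<in> carrier_vec N"
    and v: "v \<in> carrier_vec N" and qa: "qform n a = 0" and ab: "bform n a b = 0"
    and conj: "esd n a b \<in> EO_maps n" "esd n a ((-1) \<cdot>\<^sub>v b) \<in> EO_maps n"
    and image: "esd n (esd n a b u) (esd n a b v) \<in> EO_maps n"
  shows "esd n u v \<in> EO_maps n"
proof (rule EO_maps_cong)
  show "esd n a ((-1) \<cdot>\<^sub>v b) \<circ> esd n (esd n a b u) (esd n a b v) \<circ> esd n a b \<in> EO_maps n"
    using conj image by (intro EO_maps_comp)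
  fix x :: "'a vec" assume x: "x \<in> carrier_vec N"
  show "(esd n a ((-1) \<cdot>\<^sub>v b) \<circ> esd n (esd n a b u) (esd n a b v) \<circ> esd n a b) x = esd n u v x"
    using esd_conj[OF a b u v x qa ab, symmetric] esd_inverse[OF a b esd_carrier[OF u v x] qa ab] by simp
qed

lemma esd_long_root_in_EO:
  fixes y :: 'a
  assumes a: "a \<in> {1..2*n}" and b: "b \<in> {1..2*n}" and ba: "b \<noteq> a" and b_partner: "b \<noteq> partner a"
  shows "esd n (unit_vec N a) (y \<cdot>\<^sub>v unit_vec N b) \<in> EO_maps n"
proof -
  define t where "t = half * y"
  define w where "w = unit_vec N 0 + y \<cdot>\<^sub>v unit_vec N b"
  let ?g = "esd n (unit_vec N b) ((-t) \<cdot>\<^sub>v unit_vec N 0)"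
  have t: "2 * t = y" using two_mult_half unfolding t_def by (simp add: mult.assoc[symmetric])
  have a_N: "a < N" "a \<noteq> 0" "partner a < N" "partner a \<noteq> 0"
    using a partner_less_dim[OF a] partner_in_range[OF a] by auto
  have "partner b \<noteq> a"
  proof
    assume "partner b = a"
    then have "partner a = b" using partner_partner[of b] b by simp
    then show False using b_partner by simp
  qed
  then have b_N: "b < N" "b \<noteq> 0" "partner b < N" "partner b \<noteq> 0" "partner b \<noteq> b" "partner b \<noteq> a"
    using b partner_less_dim[OF b] partner_in_range[OF b] partner_neq[of b] by auto
  have w: "w \<in> carrier_vec N" unfolding w_def by simp
  have qb: "qform n (unit_vec N b :: 'a vec) = 0" using qform_unit_vec[OF b] .
  have b0: "bform n (unit_vec N b) ((-t) \<cdot>\<^sub>v unit_vec N 0) = 0"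
    using b_N by (simp add: bform_linear bform_unit_vec_left)
  \<comment> \<open>Conjugation by the generator \<open>?g\<close> fixes \<open>e\<^sub>a\<close> and moves \<open>e\<^sub>0 + y e\<^sub>b\<close> to \<open>e\<^sub>0\<close>.\<close>
  have "bform n ((-t) \<cdot>\<^sub>v unit_vec N 0) (unit_vec N a) = 0" "bform n (unit_vec N b) (unit_vec N a :: 'a vec) = 0"
    using a_N b_N by (simp_all add: bform_linear bform_unit_vec_left)
  then have g_a: "?g (unit_vec N a) = unit_vec N a"
    by (intro eq_vecI) (simp_all add: esd_index)
  have "bform n ((-t) \<cdot>\<^sub>v unit_vec N 0) w = - y" "bform n (unit_vec N b) w = 0"
    unfolding w_def using b_N t by (simp_all add: bform_linear bform_unit_vec_left mult.commute)
  then have g_w: "?g w = unit_vec N 0"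
    using w b_N by (intro eq_vecI) (auto simp: esd_index w_def)
  have w_in_EO: "esd n (unit_vec N a) w \<in> EO_maps n"
  proof (rule esd_conj_in_EO[OF _ _ _ w qb b0])
    show "?g \<in> EO_maps n" using esd_root_in_EO[OF b] .
    show "esd n (unit_vec N b) ((-1) \<cdot>\<^sub>v ((-t) \<cdot>\<^sub>v unit_vec N 0)) \<in> EO_maps n"
      using esd_root_in_EO[OF b, of t] by (simp add: smult_smult_assoc)
    show "esd n (?g (unit_vec N a)) (?g w) \<in> EO_maps n"
      using esd_root_in_EO[OF a, of 1] unfolding g_a g_w by simp
  qed simp_all
  show ?thesis
  proof (rule EO_maps_cong)
    show "esd n (unit_vec N a) ((-1) \<cdot>\<^sub>v unit_vec N 0) \<circ> esd n (unit_vec N a) w \<in> EO_maps n"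
      using esd_root_in_EO[OF a] w_in_EO by (rule EO_maps_comp)
    have orth: "bform n (unit_vec N a) ((-1) \<cdot>\<^sub>v unit_vec N 0) = 0" "bform n (unit_vec N a) w = 0"
      unfolding w_def using a_N b_N b_partner by (simp_all add: bform_linear bform_unit_vec_left)
    have "(-1) \<cdot>\<^sub>v unit_vec N 0 + w = y \<cdot>\<^sub>v unit_vec N b" unfolding w_def by (intro eq_vecI) auto
    then show "(esd n (unit_vec N a) ((-1) \<cdot>\<^sub>v unit_vec N 0) \<circ> esd n (unit_vec N a) w) x
      = esd n (unit_vec N a) (y \<cdot>\<^sub>v unit_vec N b) x" if "x \<in> carrier_vec N" for x
      using esd_add[OF _ _ w that qform_unit_vec[OF a] orth] by simp
  qed
qed

lemma esd_unit_vec_smult_unit_vec_in_EO: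
  fixes c :: 'a
  assumes a: "a \<in> {1..2*n}" and k: "k < N" "k \<noteq> partner a"
  shows "esd n (unit_vec N a) (c \<cdot>\<^sub>v unit_vec N k) \<in> EO_maps n"
proof -
  consider "k = 0" | "k = a" | "k \<in> {1..2*n}" "k \<noteq> a" using k dim_eq by force
  then show ?thesis
  proof cases
    case 1 then show ?thesis using esd_root_in_EO[OF a] by simp
  next
    case 2 then show ?thesis
      using esd_self_smult[OF _ _ qform_unit_vec[OF a]] by (intro EO_maps_if_identity) simp
  next
    case 3 then show ?thesis using esd_long_root_in_EO[OF a] k by simp
  qed
qed

lemma esd_unit_vec_in_EO:
  fixes v :: "'a vec"
  assumes a: "a \<in> {1..2*n}" and v: "v \<in> carrier_vec N" and av: "bform n (unit_vec N a) v = 0"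
  shows "esd n (unit_vec N a) v \<in> EO_maps n"
proof -
  define trunc where "trunc k = vec N (\<lambda>j. if j < k then v $ j else 0)" for k
  have a_N: "a < N" "partner a < N" using partner_less_dim[OF a] by auto
  have v_partner: "v $ partner a = 0" using av bform_unit_vec_left[OF v a_N(1)] a by simp
  have trunc_carrier: "trunc k \<in> carrier_vec N" for k by (simp add: trunc_def)
  have orth_trunc: "bform n (unit_vec N a) (trunc k) = 0" for k
    using a a_N v_partner by (simp add: bform_unit_vec_left trunc_def)
  have orth_coord: "bform n (unit_vec N a) (v $ k \<cdot>\<^sub>v unit_vec N k) = 0" if "k < N" for k
    using a a_N v_partner that by (cases "k = partner a") (simp_all add: bform_linear bform_unit_vec_left)
  have coord: "esd n (unit_vec N a) (v $ k \<cdot>\<^sub>v unit_vec N k) \<in> EO_maps n" if k: "k < N" for k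
  proof (cases "k = partner a")
    case True
    then have "v $ k = 0" using v_partner by simp
    then have "v $ k \<cdot>\<^sub>v unit_vec N k = 0\<^sub>v N" by auto
    then show ?thesis using esd_zero by (intro EO_maps_if_identity) simp
  next
    case False
    then show ?thesis using esd_unit_vec_smult_unit_vec_in_EO[OF a k] by simp
  qed
  have "esd n (unit_vec N a) (trunc k) \<in> EO_maps n" if "k \<le> N" for k
    using that
  proof (induction k)
    case 0
    have "trunc 0 = 0\<^sub>v N" by (auto simp: trunc_def)
    then show ?case using esd_zero by (intro EO_maps_if_identity) simp
  next
    case (Suc k)
    then have k: "k < N" by simp
    have "trunc (Suc k) = trunc k + v $ k \<cdot>\<^sub>v unit_vec N k"
      by (rule eq_vecI) (auto simp: trunc_def k less_Suc_eq)
    then have "(esd n (unit_vec N a) (trunc k) \<circ> esd n (unit_vec N a) (v $ k \<cdot>\<^sub>v unit_vec N k)) x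
        = esd n (unit_vec N a) (trunc (Suc k)) x" if "x \<in> carrier_vec N" for x
      using esd_add[OF _ trunc_carrier _ that qform_unit_vec[OF a] orth_trunc orth_coord[OF k]] by simp
    then show ?case
      by (rule EO_maps_cong[OF EO_maps_comp[OF Suc.IH[OF less_imp_le[OF k]] coord[OF k]]])
  qed
  moreover have "trunc N = v" using v by (auto simp: trunc_def)
  ultimately show ?thesis by auto
qed

lemma esd_elementary_esd_image:
  fixes a :: "'a vec"
  assumes a: "a \<in> carrier_vec N" and b: "b \<in> carrier_vec N" and u: "u \<in> carrier_vec N"
    and qa: "qform n a = 0" and ab: "bform n a b = 0"
    and conj: "esd n a b \<in> EO_maps n" "esd n a ((-1) \<cdot>\<^sub>v b) \<in> EO_maps n"
    and image: "esd_elementary n (esd n a b u)"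
  shows "esd_elementary n u"
  unfolding esd_elementary_iff
proof (intro ballI impI)
  fix v assume v: "v \<in> carrier_vec N" and uv: "bform n u v = 0"
  have "bform n (esd n a b u) (esd n a b v) = 0" using bform_esd[OF a b u v qa ab] uv by simp
  then have "esd n (esd n a b u) (esd n a b v) \<in> EO_maps n"
    using image a b v unfolding esd_elementary_iff by simp
  then show "esd n u v \<in> EO_maps n" using esd_conj_in_EO[OF a b u v qa ab conj] by simp
qed

lemma esd_elementary_smult_unit_vec:
  fixes c :: 'a
  assumes a: "a \<in> {1..2*n}"
  shows "esd_elementary n (c \<cdot>\<^sub>v unit_vec N a)"
  unfolding esd_elementary_iff
proof (intro ballI impI)
  fix v assume v: "v \<in> carrier_vec N" and av: "bform n (c \<cdot>\<^sub>v unit_vec N a) v = 0"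
  then have "bform n (unit_vec N a) (c \<cdot>\<^sub>v v) = 0" by (simp add: bform_linear)
  then have "esd n (unit_vec N a) (c \<cdot>\<^sub>v v) \<in> EO_maps n" using esd_unit_vec_in_EO[OF a] v by simp
  then show "esd n (c \<cdot>\<^sub>v unit_vec N a) v \<in> EO_maps n"
    by (rule EO_maps_cong) (simp add: esd_smult v)
qed

end

section \<open>Moving a unimodular vector over a semilocal ring\<close>

context odd_orthogonal
begin

lemma esd_elementary_of_unit_coord:
  fixes u :: "'a vec"
  assumes n: "1 \<le> n" and u: "u \<in> carrier_vec N" and qu: "qform n u = 0" and eps: "u $ 2 * \<epsilon> = 1"
  shows "esd_elementary n u"
proof -
  have one: "1 \<in> {1..2*n}" and two: "2 \<in> {1..2*n}" using n by auto
  have i12: "1 < N" "2 < N" using n dim_eq by auto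
  have partner12: "partner 1 = 2" "partner 2 = 1" by (simp_all add: partner_def)
  define w where "w = vec N (\<lambda>j. if j = 1 \<or> j = 2 then 0 else u $ j * \<epsilon>)"
  have w: "w \<in> carrier_vec N" by (simp add: w_def)
  have w12: "w $ 1 = 0" "w $ 2 = 0" using i12 by (auto simp: w_def)
  have orth: "bform n (unit_vec N 1) w = 0"
    using bform_unit_vec_left[OF w i12(1)] partner12 w12 by simp
  have orth': "bform n (unit_vec N 1) ((-1) \<cdot>\<^sub>v w) = 0" using orth w by (simp add: bform_linear)
  define u' where "u' = esd n (unit_vec N 1) w u"
  define z where "z = u' $ 1"
  \<comment> \<open>Since \<open>u\<^sub>2 \<epsilon> = 1\<close>, the transvection \<open>\<sigma>\<^sub>e\<^sub>1\<^sub>,\<^sub>w\<close> clears every coordinate of \<open>u\<close>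
    except the first two.\<close>
  have u'_eq: "u' = z \<cdot>\<^sub>v unit_vec N 1 + u $ 2 \<cdot>\<^sub>v unit_vec N 2"
  proof (rule eq_vecI)
    fix j assume "j < dim_vec (z \<cdot>\<^sub>v unit_vec N 1 + u $ 2 \<cdot>\<^sub>v unit_vec N 2)"
    then have j: "j < N" by simp
    have "u' $ j = u $ j + bform n w u * unit_vec N 1 $ j - u $ 2 * w $ j - qform n w * u $ 2 * unit_vec N 1 $ j"
      unfolding u'_def using esd_index[OF _ w u j] bform_unit_vec_left[OF u i12(1)] partner12 by simp
    moreover have "u $ j - u $ 2 * (u $ j * \<epsilon>) = 0"
      using eps by (simp add: mult.left_commute[of "u $ 2"])
    ultimately show "u' $ j = (z \<cdot>\<^sub>v unit_vec N 1 + u $ 2 \<cdot>\<^sub>v unit_vec N 2) $ j"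
      using j i12 w12 unfolding z_def by (auto simp: w_def)
  qed (simp add: u'_def esd_def)
  have "bform n u' u' = 0"
    using qform_esd[OF _ w u qform_unit_vec[OF one] orth] qu bform_self[of u'] unfolding u'_def by simp
  moreover have "bform n u' u' = 2 * z * u $ 2"
    unfolding u'_eq using i12 partner12 by (simp add: bform_linear bform_unit_vec_left algebra_simps)
  ultimately have isotropic: "2 * z * u $ 2 = 0" by simp
  have "z = z * ((2 * half) * (u $ 2 * \<epsilon>))" using two_mult_half eps by simp
  also have "\<dots> = half * \<epsilon> * (2 * z * u $ 2)" by (simp add: algebra_simps)
  finally have "z = 0" using isotropic by simp
  then have "u' = u $ 2 \<cdot>\<^sub>v unit_vec N 2" unfolding u'_eq by (intro eq_vecI) auto
  then have "esd_elementary n (esd n (unit_vec N 1) w u)"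
    using esd_elementary_smult_unit_vec[OF two] unfolding u'_def by simp
  then show ?thesis
    using esd_elementary_esd_image[OF _ w u qform_unit_vec[OF one] orth esd_unit_vec_in_EO[OF one w orth]]
      esd_unit_vec_in_EO[OF one _ orth'] w by simp
qed

lemma esd_unit_vec_two_index:
  assumes n: "1 \<le> n" and u: "u \<in> carrier_vec N" and w: "w \<in> carrier_vec N" and w2: "w $ 2 = 0"
  shows "esd n (unit_vec N 2) w u $ 2 = u $ 2 + bform n w u - qform n w * u $ 1"
proof -
  have "2 < N" "partner 2 = 1" using n dim_eq by (simp_all add: partner_def)
  then show ?thesis
    using esd_index[OF _ w u, of "unit_vec N 2" 2] bform_unit_vec_left[OF u, of 2] w2 by simp
qed

lemma exists_esd_coord_notin_maximal_ideal:
  fixes u :: "'a vec"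
  assumes n: "1 \<le> n" and u: "u \<in> carrier_vec N" and um: "unimodular u" and qu: "qform n u = 0"
    and m: "maximal_ideal m"
  obtains w where "w \<in> carrier_vec N" "w $ 1 = 0" "w $ 2 = 0" "esd n (unit_vec N 2) w u $ 2 \<notin> m"
proof -
  have I: "ring_ideal m" using m maximal_ideal_imp_ring_ideal by blast
  have i012: "0 < N" "1 < N" "2 < N" using n dim_eq by auto
  consider (u2) "u $ 2 \<notin> m"
    | (far) c where "c \<in> {3..2*n}" "u $ c \<notin> m" "u $ 2 \<in> m"
    | (near) "u $ 2 \<in> m" "\<And>c. c \<in> {3..2*n} \<Longrightarrow> u $ c \<in> m"
    by blast
  then show ?thesis
  proof cases
    case u2
    then show ?thesis
      using that[of "0\<^sub>v N"] esd_unit_vec_two_index[OF n u] i012 u by (simp add: bform_linear qform_zero)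
  next
    case far
    have c: "partner c \<in> {1..2*n}" "partner (partner c) = c" using far(1) partner_in_range partner_partner
      by auto
    have "3 \<le> c" using far(1) by simp
    then have c12: "partner c \<noteq> 1" "partner c \<noteq> 2" unfolding partner_def by presburger+
    let ?w = "unit_vec N (partner c) :: 'a vec"
    have "esd n (unit_vec N 2) ?w u $ 2 = u $ 2 + u $ c"
      using esd_unit_vec_two_index[OF n u, of ?w] c c12 bform_unit_vec_left[OF u, of "partner c"]
        partner_less_dim[OF c(1)] qform_unit_vec[OF c(1)] by simp
    moreover have "u $ 2 + u $ c \<notin> m"
    proof
      assume "u $ 2 + u $ c \<in> m"
      then have "(u $ 2 + u $ c) - u $ 2 \<in> m" using ring_ideal_diff[OF I] far(3) by blast
      then show False using far(2) by simp
    qed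
    ultimately show ?thesis using that[of ?w] c12 partner_less_dim[OF c(1)] i012 by simp
  next
    case near
    \<comment> \<open>Isotropy forces \<open>u\<^sub>0 \<in> m\<close>, so unimodularity leaves \<open>u\<^sub>1\<close> as the only unit coordinate
      modulo \<open>m\<close>.\<close>
    have u0: "u $ 0 \<in> m"
    proof -
      have "(\<Sum>i\<in>{1..2*n}. u $ i * u $ partner i) \<in> m"
      proof (rule ring_ideal_sum[OF I])
        fix i assume i: "i \<in> {1..2*n}"
        show "u $ i * u $ partner i \<in> m"
        proof (cases "i = 1")
          case True
          moreover have "partner 1 = 2" by (simp add: partner_def)
          ultimately show ?thesis using ring_ideal_mult_left[OF I near(1), of "u $ 1"] by simp
        next
          case False
          then have "u $ i \<in> m" using i near by (cases "i = 2") auto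
          then show ?thesis using ring_ideal_mult_right[OF I] by blast
        qed
      qed
      moreover have "2 * u $ 0 * u $ 0 + (\<Sum>i\<in>{1..2*n}. u $ i * u $ partner i) = 0"
        using bform_expand[OF u u] bform_self[of u] qu by simp
      ultimately have "2 * u $ 0 * u $ 0 \<in> m"
        using ring_ideal_diff[OF I ring_ideal_zero[OF I]] by (metis add.commute diff_0 eq_neg_iff_add_eq_0)
      then have "half * (2 * u $ 0 * u $ 0) \<in> m" using ring_ideal_mult_left[OF I] by blast
      moreover have "half * (2 * u $ 0 * u $ 0) = u $ 0 * u $ 0"
        using two_mult_half by (simp add: mult.assoc[symmetric] mult.commute[of half])
      ultimately have "u $ 0 * u $ 0 \<in> m" by simp
      then show ?thesis using maximal_ideal_prime[OF m] by blast
    qed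
    have u1: "u $ 1 \<notin> m"
    proof
      assume u1: "u $ 1 \<in> m"
      obtain j where j: "j < dim_vec u" "u $ j \<notin> m" using unimodular_notin_maximal_ideal[OF um m] .
      then have "j = 0 \<or> j = 1 \<or> j = 2 \<or> j \<in> {3..2*n}" using u dim_eq by auto
      then show False using j(2) u0 u1 near by auto
    qed
    have "esd n (unit_vec N 2) (unit_vec N 0) u $ 2 = u $ 2 + 2 * u $ 0 - u $ 1"
      using esd_unit_vec_two_index[OF n u, of "unit_vec N 0"] i012
        bform_unit_vec_left[OF u i012(1)] qform_unit_vec_zero by simp
    moreover have "u $ 2 + 2 * u $ 0 - u $ 1 \<notin> m"
    proof
      assume "u $ 2 + 2 * u $ 0 - u $ 1 \<in> m"
      moreover have "u $ 2 + 2 * u $ 0 \<in> m"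
        using near(1) u0 by (intro ring_ideal_add[OF I] ring_ideal_mult_left[OF I])
      ultimately have "(u $ 2 + 2 * u $ 0) - (u $ 2 + 2 * u $ 0 - u $ 1) \<in> m"
        using ring_ideal_diff[OF I] by blast
      then show False using u1 by simp
    qed
    ultimately show ?thesis using that[of "unit_vec N 0"] i012 by simp
  qed
qed

lemma exists_esd_unit_coord:
  fixes u :: "'a vec"
  assumes fin: "finite {m :: 'a set. maximal_ideal m}" and n: "1 \<le> n" and u: "u \<in> carrier_vec N"
    and um: "unimodular u" and qu: "qform n u = 0"
  obtains w \<epsilon> where "w \<in> carrier_vec N" "w $ 1 = 0" "w $ 2 = 0" "esd n (unit_vec N 2) w u $ 2 * \<epsilon> = 1"
proof -
  let ?M = "{m :: 'a set. maximal_ideal m}"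
  define f where "f w = u $ 2 + bform n w u - qform n w * u $ 1" for w
  have "\<forall>m\<in>?M. \<exists>w. w \<in> carrier_vec N \<and> w $ 1 = 0 \<and> w $ 2 = 0 \<and> f w \<notin> m"
    using exists_esd_coord_notin_maximal_ideal[OF n u um qu] esd_unit_vec_two_index[OF n u]
    unfolding f_def by (metis mem_Collect_eq)
  then obtain wm where wm: "\<And>m. m \<in> ?M \<Longrightarrow> wm m \<in> carrier_vec N \<and> wm m $ 1 = 0 \<and> wm m $ 2 = 0 \<and> f (wm m) \<notin> m"
    by metis
  obtain e where crt: "\<And>c m. m \<in> ?M \<Longrightarrow> (\<Sum>m'\<in>?M. e m' * c m') - c m \<in> m"
    using chinese_remainder_maximal_ideals[OF fin] by blast
  define w where "w = vec N (\<lambda>j. \<Sum>m\<in>?M. e m * wm m $ j)"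
  have w: "w \<in> carrier_vec N" by (simp add: w_def)
  have w12: "w $ 1 = 0" "w $ 2 = 0" using n dim_eq wm by (simp_all add: w_def)
  have "f w \<notin> m" if m: "maximal_ideal m" for m
  proof
    assume fw: "f w \<in> m"
    have mM: "m \<in> ?M" using m by simp
    have I: "ring_ideal m" using m maximal_ideal_imp_ring_ideal by blast
    define d where "d = w - wm m"
    have wm_m: "wm m \<in> carrier_vec N" using wm[OF mM] by blast
    have d: "d \<in> carrier_vec N" using w wm_m unfolding d_def by simp
    have d_m: "d $ j \<in> m" if "j < N" for j
      using crt[OF mM, of "\<lambda>m'. wm m' $ j"] that wm_m by (simp add: d_def w_def)
    have "f w - f (wm m) = bform n d u - half * bform n d (w + wm m) * u $ 1"
      using u w wm_m bform_commute[OF w wm_m]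
      by (simp add: f_def d_def qform_eq_half bform_linear algebra_simps)
    also have "\<dots> \<in> m"
      using bform_in_ideal[OF I d u d_m] bform_in_ideal[OF I d _ d_m, of "w + wm m"] w wm_m
      by (intro ring_ideal_diff[OF I] ring_ideal_mult_right[OF I] ring_ideal_mult_left[OF I]) auto
    finally have "f w - (f w - f (wm m)) \<in> m" using fw ring_ideal_diff[OF I] by blast
    then show False using wm[OF mM] by simp
  qed
  then obtain \<epsilon> where "f w * \<epsilon> = 1" by (rule unit_if_notin_maximal_ideals)
  then show ?thesis using that[OF w w12] esd_unit_vec_two_index[OF n u w w12(2)] unfolding f_def by simp
qed

lemma esd_elementary_unimodular:
  fixes u :: "'a vec"
  assumes fin: "finite {m :: 'a set. maximal_ideal m}" and n: "1 \<le> n" and u: "u \<in> carrier_vec N"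
    and um: "unimodular u" and qu: "qform n u = 0"
  shows "esd_elementary n u"
proof -
  obtain w \<epsilon> where w: "w \<in> carrier_vec N" "w $ 1 = 0" "w $ 2 = 0"
    and eps: "esd n (unit_vec N 2) w u $ 2 * \<epsilon> = 1"
    using exists_esd_unit_coord[OF fin n u um qu] .
  have two: "2 \<in> {1..2*n}" using n by simp
  have orth: "bform n (unit_vec N 2) w = 0"
    using bform_unit_vec_left[OF w(1)] partner_less_dim[OF two] w(2,3) by (simp add: partner_def)
  have orth': "bform n (unit_vec N 2) ((-1) \<cdot>\<^sub>v w) = 0" using orth w(1) by (simp add: bform_linear)
  have "qform n (esd n (unit_vec N 2) w u) = 0"
    using qform_esd[OF _ w(1) u qform_unit_vec[OF two] orth] qu by simp
  then have "esd_elementary n (esd n (unit_vec N 2) w u)"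
    using esd_elementary_of_unit_coord[OF n _ _ eps] w u by simp
  then show ?thesis
    using esd_elementary_esd_image[OF _ w(1) u qform_unit_vec[OF two] orth
        esd_unit_vec_in_EO[OF two w(1) orth]] esd_unit_vec_in_EO[OF two _ orth'] w(1) by simp
qed

end

theorem mainTheorem8:
  fixes u v :: "'a::comm_ring_1 vec" and n :: nat
  assumes "semilocal TYPE('a)"
    and "(2::'a) dvd 1"
    and "n \<ge> 3"
    and "u \<in> carrier_vec (2*n+1)" and "v \<in> carrier_vec (2*n+1)"
    and "unimodular u" and "qform n u = 0" and "bform n u v = 0"
  shows "esd_mat n u v \<in> EO n"
proof -
  obtain half :: 'a where "2 * half = 1" using assms(2) by (metis dvd_def)
  then interpret odd_orthogonal n "2*n+1" half by unfold_locales simp_all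
  have "esd_elementary n u"
    using esd_elementary_unimodular assms(1,3,4,6,7) unfolding semilocal_def by simp
  then have "esd n u v \<in> EO_maps n" using assms(5,8) unfolding esd_elementary_iff by blast
  then show ?thesis using esd_mat_in_EO assms(4,5) by blast
qed

end
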